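(* Fix $n \ge 1$ and finite sets $\mathsf{AP}^I_L$, $\mathsf{AP}^O$, and let $\mathcal{I} = 2^{\mathsf{AP}^I_L \times \{0,\dots,n-1\}}$ and $\mathcal{O} = 2^{\mathsf{AP}^O \times \{0,\dots,n-1\}}$. A computation tree $\langle \mathcal{I}^*, \tau\rangle$ with $\tau : \mathcal{I}^* \to \mathcal{O}$ is regular and has the symmetry property if and only if it is the computation tree induced by the rotation-symmetric architecture with $n$ processes for some finite-state process implementation (Moore machine) $\mathcal{M}$ with input alphabet $\mathcal{I}$ and output alphabet $2^{\mathsf{AP}^O}$.
   Context: All indices are taken modulo $n$, where the modulo function always returns a value in $\{0,\dots,n-1\}$. For a set $\mathsf{AP}$, $U = 2^{\mathsf{AP}\times\{0,\dots,n-1\}}$ and $k \in \mathbb{Z}$, define $\mathrm{rot}(u,k) = \{(p,(j+k) \bmod n) \mid (p,j) \in u\}$ for $u \in U$; $\mathrm{rot}$ is extended letterwise to finite and infinite words over $U$. A computation tree is a map $\tau : \mathcal{I}^* \to \mathcal{O}$ (the label $\tau(t)$ is the output after reading the input sequence $t$). For $\hat t \in \mathcal{I}^*$, the subtree at $\hat t$ is the tree $t \mapsto \tau(\hat t t)$; the tree is regular if it has only finitely many distinct subtrees. The tree has the symmetry property if $\tau(\mathrm{rot}(t,i)) = \mathrm{rot}(\tau(t),i)$ for all $t \in \mathcal{I}^*$ and $0 \le i < n$. A Moore machine is $\mathcal{M} = (S,\mathcal{I},O,\delta,s_0,L)$ with finite state set $S$, transition function $\delta : S\times\mathcal{I}\to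 S$, initial state $s_0$ and labelling $L : S \to O$, where $O = 2^{\mathsf{AP}^O}$. The rotation-symmetric architecture with $n$ processes runs $n$ copies $p_0,\dots,p_{n-1}$ of $\mathcal{M}$ synchronously: the composed machine has states $S^n$, initial state $(s_0,\dots,s_0)$, transition $\delta'((s_0',\dots,s_{n-1}'),x) = (\delta(s_0',\mathrm{rot}(x,0)),\delta(s_1',\mathrm{rot}(x,-1)),\dots,\delta(s_{n-1}',\mathrm{rot}(x,-(n-1))))$ for $x \in \mathcal{I}$ (process $j$ sees the global input rotated by $-j$), and output $\bigcup_{j} L(s_j')\times\{j\} \in \mathcal{O}$ (the output proposition $o$ of process $j$ is the signal $(o,j)$). The induced computation tree maps $t \in \mathcal{I}^*$ to the output of the state of the composed machine reached after reading $t$ from the initial state. *)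

theory Defs
  imports Main
begin

definition alph :: "nat \<Rightarrow> 'p set \<Rightarrow> ('p \<times> nat) set set" where
  "alph n AP = Pow (AP \<times> {..<n})"

definition rot :: "nat \<Rightarrow> ('p \<times> nat) set \<Rightarrow> int \<Rightarrow> ('p \<times> nat) set" where
  "rot n u k = {(p, nat ((int j + k) mod int n)) | p j. (p, j) \<in> u}"

definition rotw :: "nat \<Rightarrow> ('p \<times> nat) set list \<Rightarrow> int \<Rightarrow> ('p \<times> nat) set list" where
  "rotw n t k = map (\<lambda>u. rot n u k) t"

definition subtree :: "'i set \<Rightarrow> ('i list \<Rightarrow> 'o) \<Rightarrow> 'i list \<Rightarrow> ('i list \<Rightarrow> 'o)" where
  "subtree I \<tau> th = (\<lambda>t. if t \<in> lists I then \<tau> (th @ t) else undefined)"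

definition regular_tree :: "'i set \<Rightarrow> ('i list \<Rightarrow> 'o) \<Rightarrow> bool" where
  "regular_tree I \<tau> \<longleftrightarrow> finite (subtree I \<tau> ` lists I)"

definition symmetric_tree ::
  "nat \<Rightarrow> 'a set \<Rightarrow> (('a \<times> nat) set list \<Rightarrow> ('b \<times> nat) set) \<Rightarrow> bool" where
  "symmetric_tree n API \<tau> \<longleftrightarrow>
     (\<forall>t \<in> lists (alph n API). \<forall>i < n. \<tau> (rotw n t (int i)) = rot n (\<tau> t) (int i))"

text \<open>Moore machine (S, I, 2^APO, \<delta>, s0, L); states are represented by naturals
  (any finite state set can be so encoded).\<close>
definition moore_machine ::
  "nat set \<Rightarrow> 'i set \<Rightarrow> 'b set \<Rightarrow> (nat \<Rightarrow> 'i \<Rightarrow> nat) \<Rightarrow> nat \<Rightarrow> (nat \<Rightarrow> 'b set) \<Rightarrow> bool" where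
  "moore_machine S I APO \<delta> s0 L \<longleftrightarrow>
     finite S \<and> s0 \<in> S \<and> (\<forall>s \<in> S. \<forall>x \<in> I. \<delta> s x \<in> S) \<and> (\<forall>s \<in> S. L s \<subseteq> APO)"

text \<open>Composed machine of the rotation-symmetric architecture: global state maps
  process index j to the local state of process j.\<close>
definition arch_step ::
  "nat \<Rightarrow> (nat \<Rightarrow> ('a \<times> nat) set \<Rightarrow> nat) \<Rightarrow> (nat \<Rightarrow> nat) \<Rightarrow> ('a \<times> nat) set \<Rightarrow> (nat \<Rightarrow> nat)" where
  "arch_step n \<delta> c x = (\<lambda>j. \<delta> (c j) (rot n x (- int j)))"

definition arch_out :: "nat \<Rightarrow> (nat \<Rightarrow> 'b set) \<Rightarrow> (nat \<Rightarrow> nat) \<Rightarrow> ('b \<times> nat) set" where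
  "arch_out n L c = (\<Union>j < n. L (c j) \<times> {j})"

definition induced_tree ::
  "nat \<Rightarrow> (nat \<Rightarrow> ('a \<times> nat) set \<Rightarrow> nat) \<Rightarrow> nat \<Rightarrow> (nat \<Rightarrow> 'b set)
    \<Rightarrow> ('a \<times> nat) set list \<Rightarrow> ('b \<times> nat) set" where
  "induced_tree n \<delta> s0 L t = arch_out n L (foldl (arch_step n \<delta>) (\<lambda>_. s0) t)"

end

theory Submission
  imports Defs
begin

text \<open>Backwards, process j of the architecture reads the input rotated by -j, so
  rotating the input by i permutes the processes cyclically and rotates the output by i;
  regularity holds because the subtree after a prefix depends only on the n-tuple of local
  states reached. Forwards, take the Moore machine whose states are the finitely many
  subtrees, labelled by the outputs of process 0: by symmetry process j sees exactly the
  outputs of index j.\<close>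

lemma rot_eq_image: "rot n u k = (\<lambda>(p, j). (p, nat ((int j + k) mod int n))) ` u"
  unfolding rot_def by auto

lemma rot_cong_mod:
  assumes "k mod int n = k' mod int n"
  shows "rot n u k = rot n u k'"
proof -
  have "(int j + k) mod int n = (int j + k') mod int n" for j
    by (metis assms mod_add_right_eq)
  then show ?thesis by (simp add: rot_eq_image)
qed

lemma rot_rot: "n > 0 \<Longrightarrow> rot n (rot n u a) b = rot n u (a + b)"
  by (simp add: rot_eq_image image_image case_prod_beta mod_add_left_eq add.assoc)

lemma mem_rot_iff:
  assumes "n > 0" and "snd ` u \<subseteq> {..<n}"
  shows "(p, m) \<in> rot n u i \<longleftrightarrow> m < n \<and> (p, nat ((int m - i) mod int n)) \<in> u"
proof
  assume "(p, m) \<in> rot n u i"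
  then obtain j where j: "(p, j) \<in> u" and m: "m = nat ((int j + i) mod int n)"
    unfolding rot_def by blast
  have "j < n" using j assms(2) by force
  moreover have "int m = (int j + i) mod int n" using m assms(1) by simp
  ultimately have "nat ((int m - i) mod int n) = j"
    by (simp add: mod_diff_left_eq)
  then show "m < n \<and> (p, nat ((int m - i) mod int n)) \<in> u"
    using j m assms(1) by (simp add: nat_less_iff)
next
  assume m: "m < n \<and> (p, nat ((int m - i) mod int n)) \<in> u"
  have "nat ((int (nat ((int m - i) mod int n)) + i) mod int n) = m"
    using m assms(1) by (simp add: mod_add_left_eq)
  then show "(p, m) \<in> rot n u i"
    using m unfolding rot_eq_image by (metis (no_types, lifting) case_prod_conv image_eqI)
qed

lemma rot_in_alph: "n > 0 \<Longrightarrow> u \<in> alph n A \<Longrightarrow> rot n u k \<in> alph n A"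
  unfolding rot_def alph_def by (auto simp: nat_less_iff)

lemma rotw_rotw: "n > 0 \<Longrightarrow> rotw n (rotw n t a) b = rotw n t (a + b)"
  by (simp add: rotw_def rot_rot)

lemma rotw_cong_mod: "k mod int n = k' mod int n \<Longrightarrow> rotw n t k = rotw n t k'"
  unfolding rotw_def using rot_cong_mod by metis

lemma rotw_in_lists_alph: "n > 0 \<Longrightarrow> t \<in> lists (alph n A) \<Longrightarrow> rotw n t k \<in> lists (alph n A)"
  unfolding rotw_def using rot_in_alph[of n _ A k] by auto

lemma foldl_closed:
  "\<forall>s \<in> S. \<forall>x \<in> I. f s x \<in> S \<Longrightarrow> s \<in> S \<Longrightarrow> u \<in> lists I \<Longrightarrow> foldl f s u \<in> S"
  by (induction u arbitrary: s) auto

lemma foldl_arch_step: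
  "foldl (arch_step n \<delta>) c t j = foldl \<delta> (c j) (rotw n t (- int j))"
  unfolding rotw_def by (induction t arbitrary: c) (simp_all add: arch_step_def)

lemma mem_arch_out: "(p, m) \<in> arch_out n L c \<longleftrightarrow> m < n \<and> p \<in> L (c m)"
  unfolding arch_out_def by blast

lemma arch_out_cong: "(\<And>j. j < n \<Longrightarrow> c j = c' j) \<Longrightarrow> arch_out n L c = arch_out n L c'"
  unfolding arch_out_def by simp

lemma rot_arch_out:
  assumes "n > 0"
  shows "rot n (arch_out n L c) i = arch_out n L (\<lambda>j. c (nat ((int j - i) mod int n)))"
proof -
  have "snd ` arch_out n L c \<subseteq> {..<n}" unfolding arch_out_def by auto
  moreover have "nat ((int m - i) mod int n) < n" for m
    using assms by (simp add: nat_less_iff)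
  ultimately show ?thesis
    using assms by (auto simp: mem_rot_iff mem_arch_out)
qed

lemma induced_tree_eq:
  "induced_tree n \<delta> s0 L t = arch_out n L (\<lambda>j. foldl \<delta> s0 (rotw n t (- int j)))"
  unfolding induced_tree_def by (rule arch_out_cong) (simp add: foldl_arch_step)

lemma induced_tree_rotw:
  assumes "n > 0"
  shows "induced_tree n \<delta> s0 L (rotw n t i) = rot n (induced_tree n \<delta> s0 L t) i"
proof -
  have "rotw n (rotw n t i) (- int j) = rotw n t (- int (nat ((int j - i) mod int n)))" for j
  proof -
    have "(i + - int j) mod int n = (- ((int j - i) mod int n)) mod int n"
      by (metis minus_diff_eq mod_minus_eq uminus_add_conv_diff add.commute)
    then show ?thesis
      unfolding rotw_rotw[OF assms] using assms by (intro rotw_cong_mod) simp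
  qed
  then show ?thesis
    using assms by (simp add: induced_tree_eq rot_arch_out)
qed

lemma symmetric_tree_induced:
  assumes "n > 0" and "\<forall>t \<in> lists (alph n API). \<tau> t = induced_tree n \<delta> s0 L t"
  shows "symmetric_tree n API \<tau>"
  using assms rotw_in_lists_alph induced_tree_rotw unfolding symmetric_tree_def by metis

lemma regular_treeI:
  assumes "finite (f ` lists I)"
    and "\<And>th t. th \<in> lists I \<Longrightarrow> t \<in> lists I \<Longrightarrow> \<tau> (th @ t) = G (f th) t"
  shows "regular_tree I \<tau>"
proof -
  define T where "T c = (\<lambda>t. if t \<in> lists I then G c t else undefined)" for c
  have "subtree I \<tau> th = T (f th)" if "th \<in> lists I" for th
    using assms(2)[OF that] unfolding subtree_def T_def by auto
  then have "subtree I \<tau> ` lists I \<subseteq> T ` f ` lists I" by auto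
  then show ?thesis
    unfolding regular_tree_def using assms(1) finite_subset by blast
qed

lemma regular_tree_induced:
  assumes n: "n > 0" and mm: "moore_machine S (alph n API) APO \<delta> s0 L"
    and eq: "\<forall>t \<in> lists (alph n API). \<tau> t = induced_tree n \<delta> s0 L t"
  shows "regular_tree (alph n API) \<tau>"
proof -
  define C where "C th = foldl (arch_step n \<delta>) (\<lambda>_. s0) th" for th
  define f where "f th = map (C th) [0..<n]" for th
  have closed: "\<forall>s\<in>S. \<forall>x\<in>alph n API. \<delta> s x \<in> S" and "s0 \<in> S" and "finite S"
    using mm unfolding moore_machine_def by auto
  then have "C th j \<in> S" if "th \<in> lists (alph n API)" for th j
    unfolding C_def foldl_arch_step
    using foldl_closed rotw_in_lists_alph[OF n that] by metis
  then have "set (f th) \<subseteq> S" if "th \<in> lists (alph n API)" for th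
    using that unfolding f_def by auto
  then have "f ` lists (alph n API) \<subseteq> {xs. set xs \<subseteq> S \<and> length xs = n}"
    by (intro image_subsetI) (simp add: f_def)
  then have "finite (f ` lists (alph n API))"
    using finite_lists_length_eq[OF \<open>finite S\<close>] finite_subset by blast
  moreover have "\<tau> (th @ t) = arch_out n L (foldl (arch_step n \<delta>) ((!) (f th)) t)"
    if "th \<in> lists (alph n API)" and "t \<in> lists (alph n API)" for th t
  proof -
    have "\<tau> (th @ t) = arch_out n L (foldl (arch_step n \<delta>) (C th) t)"
      using eq that unfolding induced_tree_def C_def by simp
    also have "\<dots> = arch_out n L (foldl (arch_step n \<delta>) ((!) (f th)) t)"
      by (rule arch_out_cong) (simp add: foldl_arch_step f_def)
    finally show ?thesis .
  qed
  ultimately show ?thesis by (rule regular_treeI)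
qed

lemma symmetric_treeD:
  assumes "n > 0" and "symmetric_tree n API \<tau>" and "t \<in> lists (alph n API)"
  shows "\<tau> (rotw n t k) = rot n (\<tau> t) k"
proof -
  define i where "i = nat (k mod int n)"
  have "i < n" and i: "int i mod int n = k mod int n"
    using assms(1) unfolding i_def by (simp_all add: nat_less_iff)
  then have "\<tau> (rotw n t (int i)) = rot n (\<tau> t) (int i)"
    using assms(2,3) unfolding symmetric_tree_def by blast
  then show ?thesis using i rotw_cong_mod rot_cong_mod by metis
qed

lemma moore_machine_encode_nat:
  assumes "finite F" and "T0 \<in> F" and closed: "\<forall>T \<in> F. \<forall>x \<in> I. \<delta>' T x \<in> F"
    and "\<forall>T \<in> F. L' T \<subseteq> APO"
  shows "\<exists>S \<delta> s0 L. moore_machine S I APO \<delta> s0 L \<and>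
           (\<forall>u \<in> lists I. L (foldl \<delta> s0 u) = L' (foldl \<delta>' T0 u))"
proof -
  obtain h where h: "bij_betw h {0..<card F} F"
    using ex_bij_betw_nat_finite[OF assms(1)] by blast
  define g where "g = inv_into {0..<card F} h"
  have hg: "h (g T) = T" if "T \<in> F" for T
    using that h bij_betw_inv_into_right unfolding g_def by metis
  have gS: "g T \<in> {0..<card F}" if "T \<in> F" for T
    using that h bij_betw_inv_into bij_betw_apply unfolding g_def by metis
  define \<delta> where "\<delta> s x = g (\<delta>' (h s) x)" for s x
  have run: "foldl \<delta> (g T) u = g (foldl \<delta>' T u)" if "T \<in> F" and "u \<in> lists I" for T u
    using that by (induction u arbitrary: T) (simp_all add: \<delta>_def hg closed)
  have "moore_machine {0..<card F} I APO \<delta> (g T0) (L' \<circ> h)"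
    unfolding moore_machine_def \<delta>_def
    using assms gS bij_betw_apply[OF h] by auto
  moreover have "(L' \<circ> h) (foldl \<delta> (g T0) u) = L' (foldl \<delta>' T0 u)" if "u \<in> lists I" for u
    using run[OF assms(2) that] hg foldl_closed[OF closed assms(2) that] by simp
  ultimately show ?thesis by blast
qed

lemma induced_tree_if_regular_symmetric:
  assumes n: "n > 0" and out: "\<forall>t \<in> lists (alph n API). \<tau> t \<in> alph n APO"
    and reg: "regular_tree (alph n API) \<tau>" and sym: "symmetric_tree n API \<tau>"
  shows "\<exists>S \<delta> s0 L. moore_machine S (alph n API) APO \<delta> s0 L \<and>
           (\<forall>t \<in> lists (alph n API). \<tau> t = induced_tree n \<delta> s0 L t)"
proof -
  define I where "I = alph n API"
  define F where "F = subtree I \<tau> ` lists I"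
  define \<delta>' where "\<delta>' T x = (\<lambda>t. if t \<in> lists I then T (x # t) else undefined)"
    for T :: "('a \<times> nat) set list \<Rightarrow> ('b \<times> nat) set" and x
  define L' where "L' T = {q. (q, 0) \<in> T []}" for T :: "('a \<times> nat) set list \<Rightarrow> ('b \<times> nat) set"
  have run: "u \<in> lists I \<Longrightarrow> foldl \<delta>' (subtree I \<tau> th) u = subtree I \<tau> (th @ u)" for th u
  proof (induction u arbitrary: th)
    case (Cons x u)
    then have "\<delta>' (subtree I \<tau> th) x = subtree I \<tau> (th @ [x])"
      unfolding \<delta>'_def subtree_def by (simp add: fun_eq_iff)
    then show ?case using Cons by simp
  qed simp
  have "\<forall>T \<in> F. \<forall>x \<in> I. \<delta>' T x \<in> F"
    unfolding F_def using run[of "[_]"] by (auto intro: rev_image_eqI)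
  moreover have "\<forall>T \<in> F. L' T \<subseteq> APO"
    using out unfolding F_def L'_def subtree_def I_def alph_def by auto
  moreover have "finite F" and "subtree I \<tau> [] \<in> F"
    using reg unfolding F_def regular_tree_def I_def by auto
  ultimately obtain S \<delta> s0 L where mm: "moore_machine S I APO \<delta> s0 L"
    and L: "\<And>u. u \<in> lists I \<Longrightarrow> L (foldl \<delta> s0 u) = L' (subtree I \<tau> u)"
    using moore_machine_encode_nat[of F "subtree I \<tau> []" I \<delta>' L' APO] run[of _ "[]"] by auto
  have "\<tau> t = induced_tree n \<delta> s0 L t" if t: "t \<in> lists I" for t
  proof -
    have "\<tau> t \<in> alph n APO" using out t unfolding I_def by blast
    then have snd: "snd ` \<tau> t \<subseteq> {..<n}" unfolding alph_def by auto
    have "L (foldl \<delta> s0 (rotw n t (- int j))) = {q. (q, j) \<in> \<tau> t}" if "j < n" for j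
    proof -
      have "rotw n t (- int j) \<in> lists I"
        using rotw_in_lists_alph[OF n] t unfolding I_def by blast
      then have "L (foldl \<delta> s0 (rotw n t (- int j))) = {q. (q, 0) \<in> \<tau> (rotw n t (- int j))}"
        by (simp add: L L'_def subtree_def)
      also have "\<dots> = {q. (q, 0) \<in> rot n (\<tau> t) (- int j)}"
        using symmetric_treeD[OF n sym] t unfolding I_def by simp
      finally show ?thesis using that n by (simp add: mem_rot_iff[OF n snd])
    qed
    then show ?thesis
      using snd by (auto simp: induced_tree_eq mem_arch_out)
  qed
  then show ?thesis using mm unfolding I_def by blast
qed

theorem lemma5:
  fixes n :: nat and API :: "'a set" and APO :: "'b set"
    and \<tau> :: "('a \<times> nat) set list \<Rightarrow> ('b \<times> nat) set"
  assumes "n \<ge> 1" and "finite API" and "finite APO"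
    and "\<forall>t \<in> lists (alph n API). \<tau> t \<in> alph n APO"
  shows "(regular_tree (alph n API) \<tau> \<and> symmetric_tree n API \<tau>) \<longleftrightarrow>
         (\<exists>S \<delta> s0 L. moore_machine S (alph n API) APO \<delta> s0 L \<and>
            (\<forall>t \<in> lists (alph n API). \<tau> t = induced_tree n \<delta> s0 L t))"
proof -
  have n: "n > 0" using assms(1) by simp
  show ?thesis (is "?tree \<longleftrightarrow> ?machine")
  proof
    assume ?tree
    then show ?machine
      using induced_tree_if_regular_symmetric[OF n assms(4)] by blast
  next
    assume ?machine
    then show ?tree
      by (elim exE conjE) (blast intro: regular_tree_induced[OF n] symmetric_tree_induced[OF n])
  qed
qed

end
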